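(* For $k=1,2,\dots$ let $f_{\pm k}(x)=x\pm e^{e^k}$ and $p_{\pm k}=\frac12\left(\frac1k-\frac1{k+1}\right)$, and let $\mu$ be the probability measure on $\mathrm{Homeo}_+(\mathbb{R})$ with $\mu(\{f_{\pm k}\})=p_{\pm k}$. Then for every $x\in\mathbb{R}$ and every compact interval $J\subset\mathbb{R}$, almost surely $F_n(x)\in J$ for only finitely many $n$. The same conclusion holds if each $f_{\pm k}$ is replaced by a map $\tilde f_{\pm k}:\mathbb{R}\to\mathbb{R}$ (chosen with the same probability $p_{\pm k}$) such that $\sup_{k}\sup_{x\in\mathbb{R}}|\tilde f_{\pm k}(x)-f_{\pm k}(x)|<\infty$.
   Context: Given the maps and probabilities, let $g_1,g_2,\dots$ be i.i.d. random maps, with $g_n$ equal to the map indexed by $\pm k$ with probability $p_{\pm k}$, and $F_n=g_n\circ\cdots\circ g_1$. *)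

theory Defs
  imports "HOL-Probability.Probability"
begin

text \<open>The maps f_{+k}, f_{-k} are indexed by the nonzero integers j = k and j = -k:
  f_j(x) = x + sgn(j) * exp(exp |j|).  (Index 0 is never chosen: it has probability 0.)\<close>
definition shift_map :: "int \<Rightarrow> real \<Rightarrow> real" where
  "shift_map j x = x + of_int (sgn j) * exp (exp (of_int \<bar>j\<bar>))"

definition pw :: "int \<Rightarrow> real" where
  "pw j = (if j = 0 then 0 else (1/2) * (1 / of_int \<bar>j\<bar> - 1 / (of_int \<bar>j\<bar> + 1)))"

primrec comp_seq :: "(nat \<Rightarrow> 'a \<Rightarrow> 'a) \<Rightarrow> nat \<Rightarrow> 'a \<Rightarrow> 'a" where
  "comp_seq g 0 = id"
| "comp_seq g (Suc n) = g (Suc n) \<circ> comp_seq g n"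

end

theory Submission
  imports Defs "HOL-Real_Asymp.Real_Asymp"
begin

text \<open>
  Put \<open>d k = exp (exp k)\<close>. Up to an error \<open>n C\<close>, \<open>F\<^sub>n x\<close> is
  \<open>x + (\<Sum>i\<le>n. sgn \<xi>\<^sub>i d \<bar>\<xi>\<^sub>i\<bar>)\<close>. As \<open>P(\<bar>\<xi>\<bar> > m) = 1/(m+1)\<close>, outside an event of
  probability \<open>O(n powr (-13/10))\<close> no step exceeds \<open>n\<^sup>3\<close>, each third of the first \<open>n\<close>
  steps has a step above \<open>n powr (9/10)\<close>, and among the levels above that threshold none is
  taken three times and no two are taken twice each. Then the top level has nonzero net sign or
  is a cancelling pair, in which case the next level among the remaining large steps is taken
  once; either way the sum exceeds \<open>d K - n d (K - 1)\<close> for some \<open>K > n powr (9/10)\<close>,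
  which outgrows every linear function of \<open>n\<close>. Borel-Cantelli finishes the proof.
\<close>

definition double_exp :: "int \<Rightarrow> real" where
  "double_exp k = exp (exp (of_int k))"

lemma double_exp_mono: "mono double_exp"
  by (simp add: monoI double_exp_def)

lemma one_le_double_exp: "1 \<le> double_exp k"
  by (simp add: double_exp_def)

lemma shift_map_eq_double_exp: "shift_map j x = x + of_int (sgn j) * double_exp \<bar>j\<bar>"
  by (simp add: shift_map_def double_exp_def)

lemma exp_mult_double_exp_le: "exp (of_int k) * double_exp (k - 1) \<le> double_exp k"
proof -
  have "2 \<le> exp (1::real)"
    using exp_ge_add_one_self[of 1] by simp
  then have "exp (of_int k - 1 :: real) * 2 \<le> exp (of_int k - 1) * exp 1"
    by (intro mult_left_mono) auto
  also have "\<dots> = exp (of_int k)"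
    by (simp add: mult_exp_exp)
  finally have "(of_int k :: real) \<le> exp (of_int k) - exp (of_int k - 1)"
    using exp_ge_add_one_self[of "of_int k - 1"] by linarith
  then have "exp (of_int k) * double_exp (k - 1)
      \<le> exp (exp (of_int k) - exp (of_int k - 1)) * double_exp (k - 1)"
    by (intro mult_right_mono) (auto simp: double_exp_def)
  then show ?thesis
    by (simp add: double_exp_def mult_exp_exp)
qed

lemma comp_seq_near_translations:
  fixes g :: "nat \<Rightarrow> real \<Rightarrow> real"
  assumes "\<And>i y. 1 \<le> i \<Longrightarrow> i \<le> n \<Longrightarrow> \<bar>g i y - (y + c i)\<bar> \<le> C"
  shows "\<bar>comp_seq g n x - (x + (\<Sum>i=1..n. c i))\<bar> \<le> real n * C"
  using assms
proof (induction n)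
  case 0
  then show ?case by simp
next
  case (Suc n)
  let ?y = "comp_seq g n x"
  have "\<bar>?y - (x + (\<Sum>i=1..n. c i))\<bar> \<le> real n * C"
    using Suc by simp
  moreover have "\<bar>g (Suc n) ?y - (?y + c (Suc n))\<bar> \<le> C"
    using Suc.prems by simp
  ultimately show ?case
    by (simp add: algebra_simps)
qed

lemma abs_signed_sum_ge_top_level:
  fixes w :: "int \<Rightarrow> real" and lv \<sigma> :: "'a \<Rightarrow> int"
  assumes "mono w" "\<And>k. 0 \<le> w k" "finite I"
    and "\<And>i. i \<in> I \<Longrightarrow> lv i \<le> K" "\<And>i. \<bar>\<sigma> i\<bar> \<le> 1"
    and "(\<Sum>i | i \<in> I \<and> lv i = K. \<sigma> i) \<noteq> 0"
  shows "w K - real (card I) * w (K - 1) \<le> \<bar>\<Sum>i\<in>I. of_int (\<sigma> i) * w (lv i)\<bar>"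
proof -
  define T where "T = {i \<in> I. lv i = K}"
  have "T \<subseteq> I" "finite T"
    using \<open>finite I\<close> by (auto simp: T_def)
  have top: "(\<Sum>i\<in>T. of_int (\<sigma> i) * w (lv i)) = of_int (\<Sum>i\<in>T. \<sigma> i) * w K"
    by (simp add: T_def sum_distrib_right)
  have "(\<Sum>i\<in>T. \<sigma> i) \<noteq> 0"
    using assms(6) by (simp add: T_def)
  then have "1 \<le> \<bar>of_int (\<Sum>i\<in>T. \<sigma> i) :: real\<bar>"
    by (metis of_int_1_le_iff of_int_abs zero_less_abs_iff int_one_le_iff_zero_less)
  then have "1 * w K \<le> \<bar>of_int (\<Sum>i\<in>T. \<sigma> i)\<bar> * w K"
    by (rule mult_right_mono) (rule assms(2))
  then have "w K \<le> \<bar>\<Sum>i\<in>T. of_int (\<sigma> i) * w (lv i)\<bar>"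
    unfolding top abs_mult using assms(2)[of K] by simp
  moreover have "\<bar>\<Sum>i\<in>I - T. of_int (\<sigma> i) * w (lv i)\<bar> \<le> real (card I) * w (K - 1)"
  proof -
    have small_term: "\<bar>of_int (\<sigma> i) * w (lv i)\<bar> \<le> w (K - 1)" if "i \<in> I - T" for i
    proof -
      have "\<bar>of_int (\<sigma> i) :: real\<bar> \<le> 1"
        using assms(5)[of i] by linarith
      then have "\<bar>of_int (\<sigma> i)\<bar> * w (lv i) \<le> 1 * w (lv i)"
        by (rule mult_right_mono) (rule assms(2))
      also have "w (lv i) \<le> w (K - 1)"
        using that assms(4)[of i] by (intro monoD[OF \<open>mono w\<close>]) (auto simp: T_def)
      finally show ?thesis
        using assms(2)[of "lv i"] by (simp add: abs_mult)
    qed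
    have "\<bar>\<Sum>i\<in>I - T. of_int (\<sigma> i) * w (lv i)\<bar> \<le> (\<Sum>i\<in>I - T. \<bar>of_int (\<sigma> i) * w (lv i)\<bar>)"
      by (rule sum_abs)
    also have "\<dots> \<le> (\<Sum>i\<in>I - T. w (K - 1))"
      by (rule sum_mono) (rule small_term)
    also have "\<dots> \<le> real (card I) * w (K - 1)"
      using assms(2,3) by (auto intro!: mult_right_mono card_mono)
    finally show ?thesis .
  qed
  moreover have "(\<Sum>i\<in>I. of_int (\<sigma> i) * w (lv i))
      = (\<Sum>i\<in>T. of_int (\<sigma> i) * w (lv i)) + (\<Sum>i\<in>I - T. of_int (\<sigma> i) * w (lv i))"
    using sum.subset_diff[OF \<open>T \<subseteq> I\<close> \<open>finite I\<close>] by (simp add: add.commute)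
  ultimately show ?thesis
    by linarith
qed

lemma abs_signed_sum_ge_max_level:
  fixes w :: "int \<Rightarrow> real" and lv \<sigma> :: "'a \<Rightarrow> int"
  assumes "mono w" "\<And>k. 0 \<le> w k" "finite I" "a \<in> I" "m < lv a" "\<And>i. \<bar>\<sigma> i\<bar> \<le> 1"
    and "(\<Sum>i | i \<in> I \<and> lv i = Max (lv ` I). \<sigma> i) \<noteq> 0"
  shows "\<exists>K > m. w K - real (card I) * w (K - 1) \<le> \<bar>\<Sum>i\<in>I. of_int (\<sigma> i) * w (lv i)\<bar>"
proof (intro exI conjI)
  show "m < Max (lv ` I)"
    using assms(3-5) by (meson Max_ge finite_imageI imageI order_less_le_trans)
  show "w (Max (lv ` I)) - real (card I) * w (Max (lv ` I) - 1) \<le> \<bar>\<Sum>i\<in>I. of_int (\<sigma> i) * w (lv i)\<bar>"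
    using abs_signed_sum_ge_top_level[where I = I and K = "Max (lv ` I)" and lv = lv and \<sigma> = \<sigma>]
      assms
    by simp
qed

lemma signed_sum_cancel_top_pair:
  fixes w :: "int \<Rightarrow> real" and lv \<sigma> :: "'a \<Rightarrow> int"
  assumes "finite I" "a \<in> I" "m < lv a"
    and \<sigma>_nonzero: "\<And>i. i \<in> I \<Longrightarrow> m < lv i \<Longrightarrow> \<sigma> i \<noteq> 0"
    and no_triple: "\<And>i j l. \<lbrakk>i \<in> I; j \<in> I; l \<in> I; distinct [i, j, l]; m < lv i;
      lv j = lv i\<rbrakk> \<Longrightarrow> lv l \<noteq> lv i"
    and top_cancels: "(\<Sum>i | i \<in> I \<and> lv i = Max (lv ` I). \<sigma> i) = 0"
  obtains u v where "u \<noteq> v" "{i \<in> I. lv i = Max (lv ` I)} = {u, v}"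
    "(\<Sum>i\<in>I. of_int (\<sigma> i) * w (lv i)) = (\<Sum>i\<in>I - {u, v}. of_int (\<sigma> i) * w (lv i))"
proof -
  define K where "K = Max (lv ` I)"
  define T where "T = {i \<in> I. lv i = K}"
  have "m < K"
    using assms(1-3) unfolding K_def by (meson Max_ge finite_imageI imageI order_less_le_trans)
  have "K \<in> lv ` I"
    unfolding K_def using assms(1,2) by (intro Max_in) auto
  then obtain u where u: "u \<in> I" "lv u = K"
    by auto
  then obtain v where v: "v \<in> I" "lv v = K" "v \<noteq> u"
    using top_cancels \<sigma>_nonzero[of u] \<open>m < K\<close> by (cases "T = {u}") (auto simp: T_def K_def)
  have "T = {u, v}"
    using no_triple[of u v] u v \<open>m < K\<close> by (auto simp: T_def)
  then have "\<sigma> u + \<sigma> v = 0"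
    using top_cancels v(3) by (simp add: T_def K_def)
  then have "of_int (\<sigma> u) * w (lv u) + of_int (\<sigma> v) * w (lv v) = 0"
    unfolding u(2) v(2) by (simp flip: distrib_right of_int_add)
  then have "(\<Sum>i\<in>I. of_int (\<sigma> i) * w (lv i)) = (\<Sum>i\<in>I - {u, v}. of_int (\<sigma> i) * w (lv i))"
    using sum.subset_diff[of "{u, v}" I "\<lambda>i. of_int (\<sigma> i) * w (lv i)"] u v assms(1) by simp
  moreover have "{i \<in> I. lv i = Max (lv ` I)} = {u, v}"
    using \<open>T = {u, v}\<close> by (simp add: T_def K_def)
  ultimately show thesis
    using that[OF not_sym[OF v(3)]] by blast
qed

lemma abs_signed_sum_ge_sparse_levels:
  fixes w :: "int \<Rightarrow> real" and lv \<sigma> :: "'a \<Rightarrow> int"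
  assumes w: "mono w" "\<And>k. 0 \<le> w k" and "finite I"
    and \<sigma>: "\<And>i. \<bar>\<sigma> i\<bar> \<le> 1" "\<And>i. i \<in> I \<Longrightarrow> m < lv i \<Longrightarrow> \<sigma> i \<noteq> 0"
    and three: "3 \<le> card {i \<in> I. m < lv i}"
    and no_triple: "\<And>i j l. \<lbrakk>i \<in> I; j \<in> I; l \<in> I; distinct [i, j, l]; m < lv i;
      lv j = lv i\<rbrakk> \<Longrightarrow> lv l \<noteq> lv i"
    and no_two_pairs: "\<And>i j u v. \<lbrakk>i \<in> I; j \<in> I; u \<in> I; v \<in> I; distinct [i, j, u, v];
      m < lv i; lv j = lv i; m < lv u\<rbrakk> \<Longrightarrow> lv v \<noteq> lv u"
  shows "\<exists>K > m. w K - real (card I) * w (K - 1) \<le> \<bar>\<Sum>i\<in>I. of_int (\<sigma> i) * w (lv i)\<bar>"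
proof -
  obtain a where a: "a \<in> I" "m < lv a"
    using three by (metis (no_types, lifting) Collect_empty_eq card.empty not_numeral_le_zero)
  show ?thesis
  proof (cases "(\<Sum>i | i \<in> I \<and> lv i = Max (lv ` I). \<sigma> i) = 0")
    case False
    then show ?thesis
      using abs_signed_sum_ge_max_level[where lv = lv and \<sigma> = \<sigma>, OF w \<open>finite I\<close> a \<sigma>(1)] by blast
  next
    case True
    obtain u v where "u \<noteq> v" and top: "{i \<in> I. lv i = Max (lv ` I)} = {u, v}"
      and cancel: "(\<Sum>i\<in>I. of_int (\<sigma> i) * w (lv i)) = (\<Sum>i\<in>I - {u, v}. of_int (\<sigma> i) * w (lv i))"
      by (rule signed_sum_cancel_top_pair[where lv = lv and \<sigma> = \<sigma> and w = w,
            OF \<open>finite I\<close> a \<sigma>(2) no_triple True])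
    define J where "J = I - {u, v}"
    have "finite J"
      using \<open>finite I\<close> by (simp add: J_def)
    have "lv a \<le> Max (lv ` I)"
      using a \<open>finite I\<close> by (intro Max_ge) auto
    moreover have "u \<in> {i \<in> I. lv i = Max (lv ` I)}" "v \<in> {i \<in> I. lv i = Max (lv ` I)}"
      unfolding top by simp_all
    ultimately have uv: "u \<in> I" "v \<in> I" "lv v = lv u" "m < lv u"
      using a by auto
    have "card {u, v} \<le> 2"
      by (simp add: card_insert_if)
    then have "\<not> {i \<in> I. m < lv i} \<subseteq> {u, v}"
      using three card_mono[of "{u, v}" "{i \<in> I. m < lv i}"] by fastforce
    then obtain b where b: "b \<in> J" "m < lv b"
      by (auto simp: J_def)
    have "Max (lv ` J) \<in> lv ` J"
      using b \<open>finite J\<close> by (intro Max_in) auto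
    then obtain u' where u': "u' \<in> J" "lv u' = Max (lv ` J)"
      by auto
    have "lv b \<le> Max (lv ` J)"
      using b \<open>finite J\<close> by (intro Max_ge) auto
    then have "m < lv u'"
      using b u' by simp
    then have "{i \<in> J. lv i = Max (lv ` J)} = {u'}"
      using no_two_pairs[of u v u'] uv u' \<open>u \<noteq> v\<close> by (auto simp: J_def)
    then have "(\<Sum>i | i \<in> J \<and> lv i = Max (lv ` J). \<sigma> i) \<noteq> 0"
      using \<sigma>(2)[of u'] u' \<open>m < lv u'\<close> by (simp add: J_def)
    then obtain K where "m < K"
      and "w K - real (card J) * w (K - 1) \<le> \<bar>\<Sum>i\<in>I. of_int (\<sigma> i) * w (lv i)\<bar>"
      unfolding cancel J_def[symmetric]
      using abs_signed_sum_ge_max_level[where lv = lv and \<sigma> = \<sigma>, OF w \<open>finite J\<close> b \<sigma>(1)]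
      by blast
    moreover have "real (card J) * w (K - 1) \<le> real (card I) * w (K - 1)"
      using w(2) \<open>finite I\<close> by (auto intro!: mult_right_mono card_mono simp: J_def)
    ultimately show ?thesis
      by force
  qed
qed

lemma eventually_double_exp_gap:
  fixes R C :: real
  assumes "0 \<le> R" "0 \<le> C"
  shows "eventually (\<lambda>n. \<forall>K. real n powr (9/10) < of_int K \<longrightarrow>
           R + real n * C < double_exp K - real n * double_exp (K - 1)) sequentially"
proof -
  have "eventually (\<lambda>n::nat. real n ^ 2 \<le> exp (real n powr (9/10))) sequentially"
    by real_asymp
  moreover have "eventually (\<lambda>n. R + C + 2 \<le> real n) sequentially"
    using filterlim_real_sequentially by (simp add: filterlim_at_top)
  ultimately show ?thesis
  proof eventually_elim
    case (elim n)
    show ?case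
    proof (intro allI impI)
      fix K :: int
      assume K: "real n powr (9/10) < of_int K"
      have "R \<le> real n * R" "0 \<le> real n * C"
        using elim(2) assms by (simp_all add: mult_le_cancel_right1)
      moreover have "real n * (R + C + 2) \<le> real n * real n"
        using elim(2) by (intro mult_left_mono) auto
      then have "real n * R + real n * C + 2 * real n \<le> real n ^ 2"
        by (simp add: power2_eq_square algebra_simps)
      moreover have "exp (real n powr (9/10)) < exp (of_int K)"
        using K by simp
      ultimately have gap: "R + real n * C + 1 \<le> exp (of_int K) - real n"
        using elim assms by linarith
      then have "0 \<le> exp (of_int K) - real n"
        using assms \<open>0 \<le> real n * C\<close> by linarith
      then have "(exp (of_int K) - real n) * 1 \<le> (exp (of_int K) - real n) * double_exp (K - 1)"
        by (rule mult_left_mono[OF one_le_double_exp])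
      then have "exp (of_int K) - real n \<le> double_exp K - real n * double_exp (K - 1)"
        using exp_mult_double_exp_le[of K] by (simp add: algebra_simps)
      with gap show "R + real n * C < double_exp K - real n * double_exp (K - 1)"
        by linarith
    qed
  qed
qed

definition level_prob :: "nat \<Rightarrow> real" where
  "level_prob k = (if k = 0 then 0 else 1 / real k - 1 / (real k + 1))"

lemma sum_pw_level: "(\<Sum>j\<in>{- int k, int k}. pw j) = level_prob k"
  by (cases "k = 0") (simp_all add: pw_def level_prob_def)

lemma sum_pw_atLeastAtMost: "(\<Sum>j = - int m..int m. pw j) = 1 - 1 / (real m + 1)"
proof (induction m)
  case 0
  then show ?case
    by (simp add: pw_def)
next
  case (Suc m)
  have "{- int (Suc m)..int (Suc m)} = {- int m..int m} \<union> {- int (Suc m), int (Suc m)}"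
    by auto
  then have "(\<Sum>j = - int (Suc m)..int (Suc m). pw j)
      = (\<Sum>j = - int m..int m. pw j) + level_prob (Suc m)"
    by (simp add: sum.union_disjoint flip: sum_pw_level)
  also have "\<dots> = 1 - 1 / (real (Suc m) + 1)"
    unfolding Suc.IH by (simp add: level_prob_def)
  finally show ?case .
qed

lemma level_prob_nonneg: "0 \<le> level_prob k"
  by (simp add: level_prob_def field_simps)

lemma level_prob_le:
  assumes "m < k"
  shows "level_prob k \<le> 1 / (real m + 1) ^ 2"
proof -
  have "level_prob k = 1 / (real k * (real k + 1))"
    using assms by (simp add: level_prob_def field_simps)
  also have "\<dots> \<le> 1 / ((real m + 1) * (real m + 1))"
    using assms by (intro divide_left_mono mult_mono) auto
  finally show ?thesis
    by (simp add: power2_eq_square)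
qed

lemma sum_level_prob_le: "(\<Sum>k = Suc m..N. level_prob k) \<le> 1 / (real m + 1)"
proof (cases "m \<le> N")
  case True
  then have "(\<Sum>k = Suc m..N. level_prob k) = 1 / (real m + 1) - 1 / (real N + 1)"
  proof (induction N rule: dec_induct)
    case (step N)
    then show ?case
      by (simp add: atLeastAtMostSuc_conv level_prob_def)
  qed simp
  then show ?thesis
    by simp
qed simp

lemma sum_level_prob_power_le:
  "(\<Sum>k = Suc m..N. level_prob k ^ Suc r) \<le> 1 / (real m + 1) ^ (2 * r + 1)"
proof -
  have "(\<Sum>k = Suc m..N. level_prob k ^ Suc r)
      \<le> (\<Sum>k = Suc m..N. level_prob k * (1 / (real m + 1) ^ 2) ^ r)"
    using level_prob_le level_prob_nonneg
    by (intro sum_mono) (auto intro!: mult_left_mono power_mono)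
  also have "\<dots> = (\<Sum>k = Suc m..N. level_prob k) * (1 / (real m + 1) ^ 2) ^ r"
    by (simp add: sum_distrib_right)
  also have "\<dots> \<le> 1 / (real m + 1) * (1 / (real m + 1) ^ 2) ^ r"
    by (rule mult_right_mono[OF sum_level_prob_le]) simp
  also have "\<dots> = 1 / (real m + 1) ^ (2 * r + 1)"
    by (simp add: power_mult power_one_over)
  finally show ?thesis .
qed

lemma (in prob_space) prob_UN_le_card_mult:
  assumes "finite S" "\<And>s. s \<in> S \<Longrightarrow> A s \<in> events" "\<And>s. s \<in> S \<Longrightarrow> prob (A s) \<le> c"
  shows "prob (\<Union>s\<in>S. A s) \<le> real (card S) * c"
  using measure_UNION_le[of S A M] sum_bounded_above[of S "\<lambda>s. prob (A s)" c] assms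
  by fastforce

text \<open>The threshold \<open>n powr (9/10)\<close> is low enough that every block of \<open>n div 3\<close> steps
  is likely to cross it, and high enough that repeated levels above it are unlikely.\<close>

definition low_level :: "nat \<Rightarrow> nat" where
  "low_level n = nat \<lfloor>real n powr (9/10)\<rfloor>"

definition large_levels :: "nat \<Rightarrow> nat set" where
  "large_levels n = {Suc (low_level n)..n ^ 3}"

definition block :: "nat \<Rightarrow> nat \<Rightarrow> nat set" where
  "block n b = {b * (n div 3) <.. (b + 1) * (n div 3)}"

definition triples :: "nat \<Rightarrow> (nat \<times> nat \<times> nat) set" where
  "triples n = {(i, j, l). i \<in> {1..n} \<and> j \<in> {1..n} \<and> l \<in> {1..n} \<and> distinct [i, j, l]}"

definition quadruples :: "nat \<Rightarrow> (nat \<times> nat \<times> nat \<times> nat) set" where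
  "quadruples n = {(i, j, u, v).
     i \<in> {1..n} \<and> j \<in> {1..n} \<and> u \<in> {1..n} \<and> v \<in> {1..n} \<and> distinct [i, j, u, v]}"

lemma low_level_bounds:
  "real (low_level n) \<le> real n powr (9/10)" "real n powr (9/10) < real (low_level n) + 1"
  using powr_ge_zero[of "real n" "9/10"] unfolding low_level_def by linarith+

lemma card_triples_le: "card (triples n) \<le> n ^ 3"
proof -
  have "triples n \<subseteq> {1..n} \<times> {1..n} \<times> {1..n}"
    by (auto simp: triples_def)
  then show ?thesis
    using card_mono[of "{1..n} \<times> {1..n} \<times> {1..n}" "triples n"]
    by (simp add: card_cartesian_product power3_eq_cube)
qed

lemma card_quadruples_le: "card (quadruples n) \<le> n ^ 4"
proof -
  have "quadruples n \<subseteq> {1..n} \<times> {1..n} \<times> {1..n} \<times> {1..n}"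
    by (auto simp: quadruples_def)
  then show ?thesis
    using card_mono[of "{1..n} \<times> {1..n} \<times> {1..n} \<times> {1..n}" "quadruples n"]
    by (simp add: card_cartesian_product power4_eq_xxxx)
qed

lemma finite_triples: "finite (triples n)"
  by (rule finite_subset[of _ "{1..n} \<times> {1..n} \<times> {1..n}"]) (auto simp: triples_def)

lemma finite_quadruples: "finite (quadruples n)"
  by (rule finite_subset[of _ "{1..n} \<times> {1..n} \<times> {1..n} \<times> {1..n}"]) (auto simp: quadruples_def)

locale shift_walk = prob_space M for M :: "'w measure" +
  fixes \<xi> :: "nat \<Rightarrow> 'w \<Rightarrow> int"
  assumes measurable_step: "\<And>n. 1 \<le> n \<Longrightarrow> \<xi> n \<in> measurable M (count_space UNIV)"
    and indep_steps: "indep_vars (\<lambda>_. count_space UNIV) \<xi> {1..}"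
    and prob_step_eq: "\<And>n j. 1 \<le> n \<Longrightarrow> prob {\<omega> \<in> space M. \<xi> n \<omega> = j} = pw j"
begin

definition step_in :: "nat \<Rightarrow> int set \<Rightarrow> 'w set" where
  "step_in i A = {\<omega> \<in> space M. \<xi> i \<omega> \<in> A}"

lemma step_in_eq_vimage: "step_in i A = \<xi> i -` A \<inter> space M"
  by (auto simp: step_in_def)

lemma step_in_sets [simp]: "1 \<le> i \<Longrightarrow> step_in i A \<in> events"
  unfolding step_in_eq_vimage by (rule measurable_sets[OF measurable_step]) auto

lemma prob_step_in:
  assumes "1 \<le> i" "finite A"
  shows "prob (step_in i A) = (\<Sum>j\<in>A. pw j)"
proof -
  have "prob (step_in i A) = prob (\<Union>j\<in>A. step_in i {j})"
    by (rule arg_cong[of _ _ prob]) (auto simp: step_in_def)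
  also have "\<dots> = (\<Sum>j\<in>A. prob (step_in i {j}))"
  proof (rule finite_measure_finite_Union)
    show "disjoint_family_on (\<lambda>j. step_in i {j}) A"
      by (auto simp: disjoint_family_on_def step_in_def)
  qed (use assms in auto)
  also have "\<dots> = (\<Sum>j\<in>A. pw j)"
    using assms prob_step_eq by (simp add: step_in_def)
  finally show ?thesis .
qed

lemma prob_INT_step_in:
  assumes "J \<noteq> {}" "finite J" "J \<subseteq> {1..}"
  shows "prob (\<Inter>i\<in>J. step_in i (A i)) = (\<Prod>i\<in>J. prob (step_in i (A i)))"
  unfolding step_in_eq_vimage by (rule indep_varsD[OF indep_steps assms]) auto

lemma prob_abs_step_gt:
  assumes "1 \<le> i"
  shows "prob (step_in i {j. int m < \<bar>j\<bar>}) = 1 / (real m + 1)"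
proof -
  have "step_in i {j. int m < \<bar>j\<bar>} = space M - step_in i {- int m..int m}"
    by (auto simp: step_in_def)
  then show ?thesis
    using assms prob_compl[of "step_in i {- int m..int m}"]
    by (simp add: prob_step_in sum_pw_atLeastAtMost)
qed

definition zero_step :: "nat \<Rightarrow> 'w set" where
  "zero_step n = (\<Union>i\<in>{1..n}. step_in i {0})"

definition huge_step :: "nat \<Rightarrow> 'w set" where
  "huge_step n = (\<Union>i\<in>{1..n}. step_in i {j. int (n ^ 3) < \<bar>j\<bar>})"

text \<open>The factor \<open>space M\<close> matters only for empty blocks (\<open>n < 3\<close>), where the
  intersection would be \<open>UNIV\<close>.\<close>

definition quiet_block :: "nat \<Rightarrow> 'w set" where
  "quiet_block n =
     (\<Union>b<3. space M \<inter> (\<Inter>i\<in>block n b. step_in i {- int (low_level n)..int (low_level n)}))"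

definition triple_level :: "nat \<Rightarrow> 'w set" where
  "triple_level n = (\<Union>(i, j, l)\<in>triples n. \<Union>k\<in>large_levels n.
     step_in i {- int k, int k} \<inter> step_in j {- int k, int k} \<inter> step_in l {- int k, int k})"

definition two_double_levels :: "nat \<Rightarrow> 'w set" where
  "two_double_levels n = (\<Union>(i, j, u, v)\<in>quadruples n. \<Union>k\<in>large_levels n. \<Union>k'\<in>large_levels n.
     step_in i {- int k, int k} \<inter> step_in j {- int k, int k} \<inter>
     step_in u {- int k', int k'} \<inter> step_in v {- int k', int k'})"

definition bad :: "nat \<Rightarrow> 'w set" where
  "bad n = zero_step n \<union> huge_step n \<union> quiet_block n \<union> triple_level n \<union> two_double_levels n"

lemma block_INT_step_in_sets: "space M \<inter> (\<Inter>i\<in>block n b. step_in i A) \<in> events"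
  by (cases "block n b = {}") (auto simp: block_def intro!: sets.finite_INT)

lemma zero_step_sets: "zero_step n \<in> events"
  unfolding zero_step_def by (intro sets.finite_UN) auto

lemma huge_step_sets: "huge_step n \<in> events"
  unfolding huge_step_def by (intro sets.finite_UN) auto

lemma quiet_block_sets: "quiet_block n \<in> events"
  unfolding quiet_block_def by (intro sets.finite_UN block_INT_step_in_sets) auto

lemma triple_level_sets: "triple_level n \<in> events"
  unfolding triple_level_def using finite_triples
  by (auto simp: triples_def large_levels_def intro!: sets.finite_UN sets.Int)

lemma two_double_levels_sets: "two_double_levels n \<in> events"
  unfolding two_double_levels_def using finite_quadruples
  by (auto simp: quadruples_def large_levels_def intro!: sets.finite_UN sets.Int)

lemma bad_sets: "bad n \<in> events"
  unfolding bad_def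
  by (intro sets.Un zero_step_sets huge_step_sets quiet_block_sets triple_level_sets
      two_double_levels_sets)

lemma prob_bad_le_sum:
  "prob (bad n) \<le> prob (zero_step n) + prob (huge_step n) + prob (quiet_block n)
     + prob (triple_level n) + prob (two_double_levels n)"
  unfolding bad_def
  using zero_step_sets huge_step_sets quiet_block_sets triple_level_sets two_double_levels_sets
  by (smt (verit) measure_Un_le sets.Un)

lemma prob_INT_levels:
  assumes "J \<noteq> {}" "finite J" "J \<subseteq> {1..}"
  shows "prob (\<Inter>i\<in>J. step_in i {- int (k i), int (k i)}) = (\<Prod>i\<in>J. level_prob (k i))"
  using assms by (simp add: prob_INT_step_in prob_step_in subset_eq sum_pw_level)

lemma prob_zero_step: "prob (zero_step n) = 0"
proof -
  have "prob (zero_step n) \<le> real (card {1..n}) * 0"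
    unfolding zero_step_def
    by (rule prob_UN_le_card_mult) (auto simp: prob_step_in pw_def)
  then show ?thesis
    using measure_nonneg[of M "zero_step n"] by simp
qed

lemma prob_huge_step_le: "prob (huge_step n) \<le> real n / (real n ^ 3 + 1)"
proof -
  have "prob (huge_step n) \<le> real (card {1..n}) * (1 / (real (n ^ 3) + 1))"
    unfolding huge_step_def
    by (rule prob_UN_le_card_mult) (use prob_abs_step_gt[of _ "n ^ 3"] in auto)
  then show ?thesis
    by simp
qed

lemma prob_quiet_block_le:
  assumes "3 \<le> n"
  shows "prob (quiet_block n) \<le> 3 * (1 - 1 / (real (low_level n) + 1)) ^ (n div 3)"
proof -
  let ?m = "int (low_level n)"
  have "prob (space M \<inter> (\<Inter>i\<in>block n b. step_in i {- ?m..?m}))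
      = (1 - 1 / (real (low_level n) + 1)) ^ (n div 3)"
    for b
  proof -
    have "block n b \<noteq> {}" "block n b \<subseteq> {1..}"
      using assms by (auto simp: block_def)
    moreover have "space M \<inter> (\<Inter>i\<in>block n b. step_in i {- ?m..?m})
        = (\<Inter>i\<in>block n b. step_in i {- ?m..?m})"
      using \<open>block n b \<noteq> {}\<close> by (auto simp: step_in_def)
    ultimately have "prob (space M \<inter> (\<Inter>i\<in>block n b. step_in i {- ?m..?m}))
        = (\<Prod>i\<in>block n b. prob (step_in i {- ?m..?m}))"
      by (simp add: prob_INT_step_in block_def)
    also have "\<dots> = (1 - 1 / (real (low_level n) + 1)) ^ (n div 3)"
      using \<open>block n b \<subseteq> {1..}\<close> by (simp add: prob_step_in sum_pw_atLeastAtMost subset_eq block_def)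
    finally show ?thesis .
  qed
  then have "prob (quiet_block n)
      \<le> real (card {..<3::nat}) * (1 - 1 / (real (low_level n) + 1)) ^ (n div 3)"
    unfolding quiet_block_def
    by (intro prob_UN_le_card_mult block_INT_step_in_sets) auto
  then show ?thesis
    by simp
qed

lemma prob_triple_level_le:
  "prob (triple_level n) \<le> real n ^ 3 * (\<Sum>k\<in>large_levels n. level_prob k ^ 3)"
proof -
  let ?c = "\<Sum>k\<in>large_levels n. level_prob k ^ 3"
  have "prob (\<Union>k\<in>large_levels n.
      step_in i {- int k, int k} \<inter> step_in j {- int k, int k} \<inter> step_in l {- int k, int k}) \<le> ?c"
    if "(i, j, l) \<in> triples n" for i j l
  proof -
    let ?E = "\<lambda>k. step_in i {- int k, int k} \<inter> step_in j {- int k, int k} \<inter>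
      step_in l {- int k, int k}"
    have E_sets: "?E k \<in> events" for k
      using that by (intro sets.Int step_in_sets) (auto simp: triples_def)
    have "?E k = (\<Inter>x\<in>{i, j, l}. step_in x {- int k, int k})" for k
      by auto
    moreover have "prob (\<Inter>x\<in>{i, j, l}. step_in x {- int k, int k}) = level_prob k ^ 3" for k
      using that by (subst prob_INT_levels) (auto simp: triples_def power3_eq_cube)
    ultimately have "prob (?E k) = level_prob k ^ 3" for k
      by simp
    then show ?thesis
      using E_sets measure_UNION_le[of "large_levels n" ?E M] by (simp add: large_levels_def)
  qed
  then have "prob (triple_level n) \<le> real (card (triples n)) * ?c"
    unfolding triple_level_def using finite_triples
    by (intro prob_UN_le_card_mult)
      (auto simp: triples_def large_levels_def intro!: sets.finite_UN sets.Int)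
  also have "\<dots> \<le> real n ^ 3 * ?c"
    using card_triples_le[of n] by (intro mult_right_mono) (auto simp: sum_nonneg level_prob_nonneg
      simp flip: of_nat_power)
  finally show ?thesis .
qed

lemma prob_two_double_levels_le:
  "prob (two_double_levels n) \<le> real n ^ 4 * (\<Sum>k\<in>large_levels n. level_prob k ^ 2) ^ 2"
proof -
  let ?c = "(\<Sum>k\<in>large_levels n. level_prob k ^ 2) ^ 2"
  have "prob (\<Union>k\<in>large_levels n. \<Union>k'\<in>large_levels n.
      step_in i {- int k, int k} \<inter> step_in j {- int k, int k} \<inter>
      step_in u {- int k', int k'} \<inter> step_in v {- int k', int k'}) \<le> ?c"
    if "(i, j, u, v) \<in> quadruples n" for i j u v
  proof -
    let ?E = "\<lambda>k k'. step_in i {- int k, int k} \<inter> step_in j {- int k, int k} \<inter>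
      step_in u {- int k', int k'} \<inter> step_in v {- int k', int k'}"
    define lv where "lv k k' x = (if x \<in> {i, j} then k else k')" for k k' :: nat and x
    have E_sets: "?E k k' \<in> events" for k k'
      using that by (intro sets.Int step_in_sets) (auto simp: quadruples_def)
    have "?E k k' = (\<Inter>x\<in>{i, j, u, v}. step_in x {- int (lv k k' x), int (lv k k' x)})" for k k'
      using that by (auto simp: lv_def quadruples_def)
    moreover have "prob (\<Inter>x\<in>{i, j, u, v}. step_in x {- int (lv k k' x), int (lv k k' x)})
        = level_prob k ^ 2 * level_prob k' ^ 2" for k k'
      using that by (subst prob_INT_levels) (auto simp: quadruples_def lv_def power2_eq_square)
    ultimately have prob_E: "prob (?E k k') = level_prob k ^ 2 * level_prob k' ^ 2" for k k'
      by simp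
    have "prob (\<Union>k\<in>large_levels n. \<Union>k'\<in>large_levels n. ?E k k')
        \<le> (\<Sum>k\<in>large_levels n. prob (\<Union>k'\<in>large_levels n. ?E k k'))"
      using E_sets by (intro measure_UNION_le sets.finite_UN) (auto simp: large_levels_def)
    also have "\<dots> \<le> (\<Sum>k\<in>large_levels n. \<Sum>k'\<in>large_levels n. prob (?E k k'))"
      using E_sets by (intro sum_mono measure_UNION_le) (auto simp: large_levels_def)
    also have "\<dots> = ?c"
      by (simp add: prob_E power2_eq_square[of "sum _ _"] sum_product)
    finally show ?thesis .
  qed
  then have "prob (two_double_levels n) \<le> real (card (quadruples n)) * ?c"
    unfolding two_double_levels_def using finite_quadruples
    by (intro prob_UN_le_card_mult)
      (auto simp: quadruples_def large_levels_def intro!: sets.finite_UN sets.Int)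
  also have "\<dots> \<le> real n ^ 4 * ?c"
    using card_quadruples_le[of n] by (intro mult_right_mono) (auto simp flip: of_nat_power)
  finally show ?thesis .
qed

lemma prob_bad_le:
  assumes "3 \<le> n"
  defines "y \<equiv> 1 / real n powr (9/10)"
  shows "prob (bad n) \<le> real n / (real n ^ 3 + 1)
    + 3 * exp (- (real n / 3 - 1) / (real n powr (9/10) + 1))
    + real n ^ 4 * y ^ 6 + real n ^ 3 * y ^ 5"
proof -
  define x where "x = 1 / (real (low_level n) + 1)"
  have "0 \<le> x" "x \<le> 1"
    by (simp_all add: x_def)
  have x_le_y: "x ^ r \<le> y ^ r" for r
    unfolding x_def y_def using assms low_level_bounds(2)[of n]
    by (intro power_mono divide_left_mono) auto
  have "(1 - x) ^ (n div 3) \<le> exp (- x) ^ (n div 3)"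
    using \<open>x \<le> 1\<close> exp_ge_add_one_self[of "- x"] by (intro power_mono) auto
  also have "\<dots> = exp (- (real (n div 3) * x))"
    by (simp flip: exp_of_nat_mult)
  also have "\<dots> \<le> exp (- (real n / 3 - 1) / (real n powr (9/10) + 1))"
  proof -
    have "(real n / 3 - 1) / (real n powr (9/10) + 1) \<le> real (n div 3) / (real n powr (9/10) + 1)"
      using powr_ge_zero[of "real n" "9/10"] by (intro divide_right_mono) linarith+
    also have "\<dots> \<le> real (n div 3) * x"
      unfolding x_def using low_level_bounds(1)[of n]
      by (simp add: divide_left_mono)
    finally have "- (real (n div 3) * x) \<le> - ((real n / 3 - 1) / (real n powr (9/10) + 1))"
      by linarith
    then show ?thesis
      by (simp only: minus_divide_left exp_le_cancel_iff)
  qed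
  finally have "prob (quiet_block n) \<le> 3 * exp (- (real n / 3 - 1) / (real n powr (9/10) + 1))"
    using prob_quiet_block_le[OF assms(1)] by (simp add: x_def)
  moreover have "prob (triple_level n) \<le> real n ^ 3 * y ^ 5"
  proof -
    have "(\<Sum>k\<in>large_levels n. level_prob k ^ 3) \<le> x ^ 5"
      using sum_level_prob_power_le[where m = "low_level n" and N = "n ^ 3" and r = 2]
      by (simp add: large_levels_def x_def power_one_over)
    then have "real n ^ 3 * (\<Sum>k\<in>large_levels n. level_prob k ^ 3) \<le> real n ^ 3 * y ^ 5"
      using x_le_y[of 5] by (intro mult_left_mono) simp_all
    then show ?thesis
      using prob_triple_level_le[of n] by linarith
  qed
  moreover have "prob (two_double_levels n) \<le> real n ^ 4 * y ^ 6"
  proof -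
    have "(\<Sum>k\<in>large_levels n. level_prob k ^ 2) \<le> x ^ 3"
      using sum_level_prob_power_le[where m = "low_level n" and N = "n ^ 3" and r = 1]
      by (simp add: large_levels_def x_def power_one_over power2_eq_square)
    then have "(\<Sum>k\<in>large_levels n. level_prob k ^ 2) ^ 2 \<le> (x ^ 3) ^ 2"
      by (intro power_mono) (simp_all add: sum_nonneg)
    then have "(\<Sum>k\<in>large_levels n. level_prob k ^ 2) ^ 2 \<le> y ^ 6"
      using x_le_y[of 6] by (simp flip: power_mult)
    then have "real n ^ 4 * (\<Sum>k\<in>large_levels n. level_prob k ^ 2) ^ 2 \<le> real n ^ 4 * y ^ 6"
      by (intro mult_left_mono) simp_all
    then show ?thesis
      using prob_two_double_levels_le[of n] by linarith
  qed
  ultimately show ?thesis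
    using prob_bad_le_sum[of n] prob_zero_step[of n] prob_huge_step_le[of n] by linarith
qed

lemma summable_prob_bad: "summable (\<lambda>n. prob (bad n))"
proof (rule summable_comparison_test_ev)
  show "summable (\<lambda>n. real n powr (-13/10))"
    by (simp add: summable_real_powr_iff)
  have "eventually (\<lambda>n. real n / (real n ^ 3 + 1)
      + 3 * exp (- (real n / 3 - 1) / (real n powr (9/10) + 1))
      + real n ^ 4 * (1 / real n powr (9/10)) ^ 6 + real n ^ 3 * (1 / real n powr (9/10)) ^ 5
      \<le> real n powr (-13/10)) sequentially"
    by real_asymp
  then show "eventually (\<lambda>n. norm (prob (bad n)) \<le> real n powr (-13/10)) sequentially"
    using eventually_ge_at_top[of 3]
    by eventually_elim (use prob_bad_le in fastforce)
qed

lemma large_level_outside_bad: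
  assumes "\<omega> \<in> space M" "\<omega> \<notin> bad n" "i \<in> {1..n}" "int (low_level n) < \<bar>\<xi> i \<omega>\<bar>"
  shows "nat \<bar>\<xi> i \<omega>\<bar> \<in> large_levels n"
proof -
  have "\<not> int (n ^ 3) < \<bar>\<xi> i \<omega>\<bar>"
    using assms by (auto simp: bad_def huge_step_def step_in_def)
  then show ?thesis
    using assms(4) by (auto simp: large_levels_def nat_le_iff)
qed

lemma in_step_in_abs_level:
  "\<omega> \<in> space M \<Longrightarrow> \<bar>\<xi> i \<omega>\<bar> = \<bar>\<xi> j \<omega>\<bar> \<Longrightarrow>
    \<omega> \<in> step_in i {- int (nat \<bar>\<xi> j \<omega>\<bar>), int (nat \<bar>\<xi> j \<omega>\<bar>)}"
  by (auto simp: step_in_def)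

lemma three_large_steps_outside_bad:
  assumes "\<omega> \<in> space M" "\<omega> \<notin> bad n"
  shows "3 \<le> card {i \<in> {1..n}. int (low_level n) < \<bar>\<xi> i \<omega>\<bar>}"
proof -
  let ?m = "int (low_level n)"
  have block_large: "\<exists>i \<in> block n b. ?m < \<bar>\<xi> i \<omega>\<bar>" if "b < 3" for b
  proof -
    have "\<omega> \<notin> space M \<inter> (\<Inter>i\<in>block n b. step_in i {- ?m..?m})"
      using that assms(2) by (auto simp: bad_def quiet_block_def)
    then obtain i where "i \<in> block n b" "\<xi> i \<omega> \<notin> {- ?m..?m}"
      using assms(1) by (auto simp: step_in_def)
    then show ?thesis
      by (intro bexI[of _ i]) auto
  qed
  obtain a0 a1 a2 where "a0 \<in> block n 0" "a1 \<in> block n 1" "a2 \<in> block n 2"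
    and "?m < \<bar>\<xi> a0 \<omega>\<bar>" "?m < \<bar>\<xi> a1 \<omega>\<bar>" "?m < \<bar>\<xi> a2 \<omega>\<bar>"
    using block_large[of 0] block_large[of 1] block_large[of 2] by auto
  moreover have "3 * (n div 3) \<le> n"
    by simp
  ultimately have "{a0, a1, a2} \<subseteq> {i \<in> {1..n}. ?m < \<bar>\<xi> i \<omega>\<bar>}" "card {a0, a1, a2} = 3"
    by (auto simp: block_def)
  then show ?thesis
    using card_mono[of "{i \<in> {1..n}. ?m < \<bar>\<xi> i \<omega>\<bar>}" "{a0, a1, a2}"] by simp
qed

lemma no_triple_level_outside_bad:
  assumes "\<omega> \<in> space M" "\<omega> \<notin> bad n"
    and "i \<in> {1..n}" "j \<in> {1..n}" "l \<in> {1..n}" "distinct [i, j, l]"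
    and "int (low_level n) < \<bar>\<xi> i \<omega>\<bar>" "\<bar>\<xi> j \<omega>\<bar> = \<bar>\<xi> i \<omega>\<bar>"
  shows "\<bar>\<xi> l \<omega>\<bar> \<noteq> \<bar>\<xi> i \<omega>\<bar>"
proof
  assume "\<bar>\<xi> l \<omega>\<bar> = \<bar>\<xi> i \<omega>\<bar>"
  then have "\<omega> \<in> step_in i {- int k, int k} \<inter> step_in j {- int k, int k} \<inter>
      step_in l {- int k, int k}"
    if "k = nat \<bar>\<xi> i \<omega>\<bar>" for k
    using that in_step_in_abs_level[OF assms(1)] assms(8) by blast
  moreover have "(i, j, l) \<in> triples n"
    using assms(3-6) by (simp add: triples_def)
  ultimately have "\<omega> \<in> triple_level n"
    unfolding triple_level_def using large_level_outside_bad[OF assms(1,2,3,7)] by blast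
  then show False
    using assms(2) by (simp add: bad_def)
qed

lemma no_two_double_levels_outside_bad:
  assumes "\<omega> \<in> space M" "\<omega> \<notin> bad n"
    and "i \<in> {1..n}" "j \<in> {1..n}" "u \<in> {1..n}" "v \<in> {1..n}" "distinct [i, j, u, v]"
    and "int (low_level n) < \<bar>\<xi> i \<omega>\<bar>" "\<bar>\<xi> j \<omega>\<bar> = \<bar>\<xi> i \<omega>\<bar>"
    and "int (low_level n) < \<bar>\<xi> u \<omega>\<bar>"
  shows "\<bar>\<xi> v \<omega>\<bar> \<noteq> \<bar>\<xi> u \<omega>\<bar>"
proof
  assume "\<bar>\<xi> v \<omega>\<bar> = \<bar>\<xi> u \<omega>\<bar>"
  then have "\<omega> \<in> step_in i {- int k, int k} \<inter> step_in j {- int k, int k} \<inter>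
      step_in u {- int k', int k'} \<inter> step_in v {- int k', int k'}"
    if "k = nat \<bar>\<xi> i \<omega>\<bar>" "k' = nat \<bar>\<xi> u \<omega>\<bar>" for k k'
    using that in_step_in_abs_level[OF assms(1)] assms(9) by blast
  moreover have "(i, j, u, v) \<in> quadruples n"
    using assms(3-7) by (simp add: quadruples_def)
  ultimately have "\<omega> \<in> two_double_levels n"
    unfolding two_double_levels_def
    using large_level_outside_bad[OF assms(1,2,3,8)] large_level_outside_bad[OF assms(1,2,5,10)]
    by blast
  then show False
    using assms(2) by (simp add: bad_def)
qed

lemma signed_sum_large_outside_bad:
  assumes "\<omega> \<in> space M" "\<omega> \<notin> bad n"
  shows "\<exists>K > int (low_level n). double_exp K - real n * double_exp (K - 1)
    \<le> \<bar>\<Sum>i\<in>{1..n}. of_int (sgn (\<xi> i \<omega>)) * double_exp \<bar>\<xi> i \<omega>\<bar>\<bar>"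
proof -
  let ?m = "int (low_level n)"
  have "\<exists>K > ?m. double_exp K - real (card {1..n}) * double_exp (K - 1)
      \<le> \<bar>\<Sum>i\<in>{1..n}. of_int (sgn (\<xi> i \<omega>)) * double_exp \<bar>\<xi> i \<omega>\<bar>\<bar>"
  proof (rule abs_signed_sum_ge_sparse_levels[where lv = "\<lambda>i. \<bar>\<xi> i \<omega>\<bar>"
        and \<sigma> = "\<lambda>i. sgn (\<xi> i \<omega>)", OF double_exp_mono _ finite_atLeastAtMost _ _
        three_large_steps_outside_bad[OF assms] no_triple_level_outside_bad[OF assms]
        no_two_double_levels_outside_bad[OF assms]])
    show "0 \<le> double_exp k" for k
      by (rule order_trans[OF zero_le_one one_le_double_exp])
    show "\<bar>sgn (\<xi> i \<omega>)\<bar> \<le> 1" for i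
      by (simp add: abs_sgn_eq)
    show "sgn (\<xi> i \<omega>) \<noteq> 0" if "?m < \<bar>\<xi> i \<omega>\<bar>" for i
      using that by (auto simp: sgn_eq_0_iff)
  qed
  then show ?thesis
    by simp
qed

lemma AE_finite_visits:
  assumes f_near: "\<And>j y. j \<noteq> 0 \<Longrightarrow> \<bar>f j y - shift_map j y\<bar> \<le> C"
  shows "AE \<omega> in M. finite {n. comp_seq (\<lambda>i. f (\<xi> i \<omega>)) n x \<in> {a..b}}"
proof -
  define R where "R = \<bar>x\<bar> + \<bar>a\<bar> + \<bar>b\<bar>"
  have "0 \<le> R" "0 \<le> C"
    using f_near[of 1 0] by (simp_all add: R_def)
  have "AE \<omega> in M. eventually (\<lambda>n. \<omega> \<in> space M - bad n) sequentially"
    using bad_sets summable_prob_bad by (intro borel_cantelli_AE1) (auto simp: emeasure_eq_measure)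
  then show ?thesis
  proof (rule AE_mp, intro AE_I2 impI)
    fix \<omega>
    assume "eventually (\<lambda>n. \<omega> \<in> space M - bad n) sequentially"
    then have "eventually (\<lambda>n. comp_seq (\<lambda>i. f (\<xi> i \<omega>)) n x \<notin> {a..b}) sequentially"
      using eventually_double_exp_gap[OF \<open>0 \<le> R\<close> \<open>0 \<le> C\<close>]
    proof eventually_elim
      case (elim n)
      let ?c = "\<lambda>i. of_int (sgn (\<xi> i \<omega>)) * double_exp \<bar>\<xi> i \<omega>\<bar>"
      obtain K where "int (low_level n) < K"
        and "double_exp K - real n * double_exp (K - 1) \<le> \<bar>\<Sum>i\<in>{1..n}. ?c i\<bar>"
        using signed_sum_large_outside_bad[of \<omega> n] elim by auto
      moreover have "real n powr (9/10) < of_int K"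
        using \<open>int (low_level n) < K\<close> low_level_bounds(2)[of n] by linarith
      ultimately have "R + real n * C < \<bar>\<Sum>i\<in>{1..n}. ?c i\<bar>"
        using elim(2) by fastforce
      moreover have "\<bar>comp_seq (\<lambda>i. f (\<xi> i \<omega>)) n x - (x + (\<Sum>i = 1..n. ?c i))\<bar> \<le> real n * C"
      proof (rule comp_seq_near_translations)
        fix i y
        assume "1 \<le> i" "i \<le> n"
        then have "\<xi> i \<omega> \<noteq> 0"
          using elim(1) by (auto simp: bad_def zero_step_def step_in_def)
        then show "\<bar>f (\<xi> i \<omega>) y - (y + ?c i)\<bar> \<le> C"
          using f_near by (simp add: shift_map_eq_double_exp)
      qed
      ultimately show ?case
        by (auto simp: R_def)
    qed
    then show "finite {n. comp_seq (\<lambda>i. f (\<xi> i \<omega>)) n x \<in> {a..b}}"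
      by (simp add: eventually_cofinite flip: cofinite_eq_sequentially)
  qed
qed

end

theorem theorem5:
  fixes M :: "'w measure" and \<xi> :: "nat \<Rightarrow> 'w \<Rightarrow> int"
  assumes "prob_space M"
    and meas: "\<And>n. n \<ge> 1 \<Longrightarrow> \<xi> n \<in> measurable M (count_space UNIV)"
    and indep: "prob_space.indep_vars M (\<lambda>_. count_space UNIV) \<xi> {1..}"
    and distr: "\<And>n j. n \<ge> 1 \<Longrightarrow> measure M {\<omega> \<in> space M. \<xi> n \<omega> = j} = pw j"
  shows "(\<forall>(x::real) (a::real) b.
            AE \<omega> in M. finite {n. comp_seq (\<lambda>i. shift_map (\<xi> i \<omega>)) n x \<in> {a..b}})
       \<and> (\<forall>ft :: int \<Rightarrow> real \<Rightarrow> real.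
            (\<exists>C. \<forall>j. j \<noteq> 0 \<longrightarrow> (\<forall>y. \<bar>ft j y - shift_map j y\<bar> \<le> C)) \<longrightarrow>
            (\<forall>(x::real) (a::real) b.
               AE \<omega> in M. finite {n. comp_seq (\<lambda>i. ft (\<xi> i \<omega>)) n x \<in> {a..b}}))"
proof -
  interpret shift_walk M \<xi>
    using assms by (auto simp: shift_walk_def shift_walk_axioms_def)
  show ?thesis
  proof (intro conjI allI impI)
    fix x a b :: real
    show "AE \<omega> in M. finite {n. comp_seq (\<lambda>i. shift_map (\<xi> i \<omega>)) n x \<in> {a..b}}"
      by (rule AE_finite_visits[of shift_map 0]) simp
  next
    fix ft :: "int \<Rightarrow> real \<Rightarrow> real" and x a b :: real
    assume "\<exists>C. \<forall>j. j \<noteq> 0 \<longrightarrow> (\<forall>y. \<bar>ft j y - shift_map j y\<bar> \<le> C)"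
    then obtain C where "\<And>j y. j \<noteq> 0 \<Longrightarrow> \<bar>ft j y - shift_map j y\<bar> \<le> C"
      by blast
    then show "AE \<omega> in M. finite {n. comp_seq (\<lambda>i. ft (\<xi> i \<omega>)) n x \<in> {a..b}}"
      by (rule AE_finite_visits)
  qed
qed

end
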